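(* Let $X$ be a connected finite $T_0$-space and let $x_0,x\in X$ with $x_0\neq x$, such that $x$ is neither a maximal nor a minimal element of $X$. Then the inclusion of simplicial complexes $\mathcal{K}(X\smallsetminus\{x\})\subseteq\mathcal{K}(X)$ induces an epimorphism $i_*:E(\mathcal{K}(X\smallsetminus\{x\}),x_0)\to E(\mathcal{K}(X),x_0)$ of edge-path groups.
   Context: Finite $T_0$-spaces are identified with finite posets via $x\le y$ iff $x$ lies in every open set containing $y$. For a finite poset $P$, $\mathcal{K}(P)$ is the simplicial complex whose simplices are the nonempty chains of $P$. $E(K,v)$ denotes the edge-path group of a simplicial complex $K$ with base vertex $v$. *)

theory Defs
  imports "HOL-Analysis.Analysis" "HOL-Algebra.Group"
begin

definition spec_le :: "'a topology \<Rightarrow> 'a \<Rightarrow> 'a \<Rightarrow> bool" where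
  "spec_le X x y \<longleftrightarrow> x \<in> topspace X \<and> y \<in> topspace X \<and>
     (\<forall>U. openin X U \<and> y \<in> U \<longrightarrow> x \<in> U)"

definition is_maximal_pt :: "'a topology \<Rightarrow> 'a \<Rightarrow> bool" where
  "is_maximal_pt X x \<longleftrightarrow> x \<in> topspace X \<and> (\<forall>y. spec_le X x y \<longrightarrow> y = x)"

definition is_minimal_pt :: "'a topology \<Rightarrow> 'a \<Rightarrow> bool" where
  "is_minimal_pt X x \<longleftrightarrow> x \<in> topspace X \<and> (\<forall>y. spec_le X y x \<longrightarrow> y = x)"

definition order_complex :: "'a topology \<Rightarrow> 'a set set" where
  "order_complex X = {c. c \<noteq> {} \<and> finite c \<and> c \<subseteq> topspace X \<and>
      (\<forall>a\<in>c. \<forall>b\<in>c. spec_le X a b \<or> spec_le X b a)}"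

definition edge_path :: "'a set set \<Rightarrow> 'a list \<Rightarrow> bool" where
  "edge_path K p \<longleftrightarrow> p \<noteq> [] \<and> (\<forall>i<length p. {p ! i} \<in> K) \<and>
     (\<forall>i. Suc i < length p \<longrightarrow> {p ! i, p ! Suc i} \<in> K)"

definition ep_move :: "'a set set \<Rightarrow> 'a list \<Rightarrow> 'a list \<Rightarrow> bool" where
  "ep_move K p q \<longleftrightarrow>
     (\<exists>xs ys u v w. p = xs @ [u, v, w] @ ys \<and> q = xs @ [u, w] @ ys \<and> {u, v, w} \<in> K) \<or>
     (\<exists>xs ys v. p = xs @ [v, v] @ ys \<and> q = xs @ [v] @ ys)"

definition ep_rel :: "'a set set \<Rightarrow> 'a list \<Rightarrow> 'a list \<Rightarrow> bool" where
  "ep_rel K p q \<longleftrightarrow> edge_path K p \<and> edge_path K q \<and> (ep_move K p q \<or> ep_move K q p)"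

definition ep_equiv :: "'a set set \<Rightarrow> 'a list \<Rightarrow> 'a list \<Rightarrow> bool" where
  "ep_equiv K = (ep_rel K)\<^sup>*\<^sup>*"

definition ep_class :: "'a set set \<Rightarrow> 'a list \<Rightarrow> 'a list set" where
  "ep_class K p = {q. ep_equiv K p q}"

definition closed_edge_path :: "'a set set \<Rightarrow> 'a \<Rightarrow> 'a list \<Rightarrow> bool" where
  "closed_edge_path K v p \<longleftrightarrow> edge_path K p \<and> hd p = v \<and> last p = v"

definition edge_path_group :: "'a set set \<Rightarrow> 'a \<Rightarrow> 'a list set monoid" where
  "edge_path_group K v =
    \<lparr> carrier = {ep_class K p | p. closed_edge_path K v p},
      monoid.mult = (\<lambda>c d. ep_class K ((SOME p. p \<in> c) @ tl (SOME q. q \<in> d))),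
      one = ep_class K [v] \<rparr>"

definition induced_incl :: "'a set set \<Rightarrow> 'a list set \<Rightarrow> 'a list set" where
  "induced_incl K c = ep_class K (SOME p. p \<in> c)"

end

theory Submission
  imports Defs
begin

text \<open>Every closed edge path of \<open>\<K>(X)\<close> based at \<open>x\<^sub>0 \<noteq> x\<close> can be pushed off the vertex \<open>x\<close>
  one occurrence at a time. Around an occurrence \<open>u x w\<close> the vertices \<open>u, w\<close> are comparable
  with \<open>x\<close>. If \<open>u, x, w\<close> form a chain, \<open>x\<close> can be dropped. If \<open>u\<close> and \<open>w\<close> both lie below
  \<open>x\<close>, pick \<open>b > x\<close> (\<open>x\<close> is not maximal): \<open>{u,x,b}\<close> and \<open>{b,x,w}\<close> are chains, so \<open>u x w\<close> is
  equivalent to \<open>u b x w\<close> and then to \<open>u b w\<close>; dually with some \<open>a < x\<close> if both lie above.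
  The resulting path lives in \<open>\<K>(X \<setminus> {x})\<close>, which gives surjectivity.\<close>

section \<open>Edge paths and their equivalence\<close>

lemma edge_path_iff_successively:
  "edge_path K p \<longleftrightarrow> p \<noteq> [] \<and> (\<forall>a\<in>set p. {a} \<in> K) \<and> successively (\<lambda>a b. {a, b} \<in> K) p"
  unfolding edge_path_def successively_conv_nth
  by (auto simp: in_set_conv_nth) (use nth_mem in blast)

lemma edge_path_mono: "K \<subseteq> L \<Longrightarrow> edge_path K p \<Longrightarrow> edge_path L p"
  unfolding edge_path_def by blast

lemma edge_path_infix: "edge_path K (l @ a @ r) \<Longrightarrow> a \<noteq> [] \<Longrightarrow> edge_path K a"
  unfolding edge_path_iff_successively by (auto simp: successively_append_iff)

lemma edge_path_replace_infix:
  assumes "edge_path K a" "edge_path K b" "hd a = hd b" "last a = last b" "edge_path K (l @ a @ r)"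
  shows "edge_path K (l @ b @ r)"
  using assms unfolding edge_path_iff_successively by (auto simp: successively_append_iff)

lemma edge_path_append:
  "edge_path K p \<Longrightarrow> edge_path K q \<Longrightarrow> last p = hd q \<Longrightarrow> edge_path K (p @ q)"
  unfolding edge_path_iff_successively by (auto simp: successively_append_iff)

lemma edge_path_remove_vertex:
  "edge_path K p \<Longrightarrow> x \<notin> set p \<Longrightarrow> edge_path {c \<in> K. x \<notin> c} p"
  unfolding edge_path_iff_successively successively_conv_nth by (auto dest: nth_mem)

lemma ep_move_mono: "K \<subseteq> L \<Longrightarrow> ep_move K p q \<Longrightarrow> ep_move L p q"
  unfolding ep_move_def by blast

lemma ep_move_hd_last: "ep_move K p q \<Longrightarrow> hd p = hd q \<and> last p = last q"
  unfolding ep_move_def by (auto simp: hd_append last_append)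

lemma ep_move_append_context: "ep_move K a b \<Longrightarrow> ep_move K (l @ a @ r) (l @ b @ r)"
  unfolding ep_move_def by (elim disjE exE conjE) (metis append.assoc)+

lemma ep_equiv_refl: "ep_equiv K p p"
  unfolding ep_equiv_def by simp

lemma ep_equiv_trans [trans]: "ep_equiv K p q \<Longrightarrow> ep_equiv K q r \<Longrightarrow> ep_equiv K p r"
  unfolding ep_equiv_def by simp

lemma ep_equiv_sym: "ep_equiv K p q \<Longrightarrow> ep_equiv K q p"
proof -
  have "symp (ep_rel K)"
    unfolding ep_rel_def symp_def by blast
  then show "ep_equiv K p q \<Longrightarrow> ep_equiv K q p"
    unfolding ep_equiv_def by (rule sympD[OF symp_rtranclp])
qed

lemma ep_equiv_move: "edge_path K p \<Longrightarrow> edge_path K q \<Longrightarrow> ep_move K p q \<Longrightarrow> ep_equiv K p q"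
  unfolding ep_equiv_def ep_rel_def by blast

lemma ep_equiv_mono:
  assumes "K \<subseteq> L" "ep_equiv K p q"
  shows "ep_equiv L p q"
proof -
  have "ep_rel K \<le> ep_rel L"
    using assms(1) edge_path_mono ep_move_mono unfolding ep_rel_def by blast
  then show ?thesis
    using assms(2) rtranclp_mono unfolding ep_equiv_def by blast
qed

lemma ep_equiv_edge_path:
  assumes "ep_equiv K p q" "edge_path K p"
  shows "edge_path K q \<and> hd q = hd p \<and> last q = last p"
  using assms unfolding ep_equiv_def
proof (induction rule: rtranclp_induct)
  case (step q r)
  then show ?case unfolding ep_rel_def using ep_move_hd_last by metis
qed simp

lemma ep_equiv_closed_edge_path:
  "ep_equiv K p q \<Longrightarrow> closed_edge_path K v p \<Longrightarrow> closed_edge_path K v q"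
  using ep_equiv_edge_path unfolding closed_edge_path_def by metis

lemma ep_class_eq: "ep_equiv K p q \<Longrightarrow> ep_class K p = ep_class K q"
  unfolding ep_class_def using ep_equiv_trans ep_equiv_sym by blast

lemma ep_equiv_append_context:
  assumes "ep_equiv K a b" "edge_path K a" "edge_path K (l @ a @ r)"
  shows "ep_equiv K (l @ a @ r) (l @ b @ r)"
  using assms(1) unfolding ep_equiv_def
proof (induction rule: rtranclp_induct)
  case (step b c)
  have b: "edge_path K b" "hd b = hd a" "last b = last a"
    using step(1) assms(2) ep_equiv_edge_path unfolding ep_equiv_def by blast+
  have c: "edge_path K c" "ep_move K b c \<or> ep_move K c b"
    using step(2) unfolding ep_rel_def by auto
  have "edge_path K (l @ b @ r)"
    using edge_path_replace_infix[OF assms(2) b(1) _ _ assms(3)] b by simp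
  moreover have "edge_path K (l @ c @ r)"
    using edge_path_replace_infix[OF b(1) c(1) _ _ \<open>edge_path K (l @ b @ r)\<close>] c(2) ep_move_hd_last
    by metis
  ultimately have "ep_rel K (l @ b @ r) (l @ c @ r)"
    unfolding ep_rel_def using c(2) ep_move_append_context by blast
  then show ?case using step(3) by simp
qed simp

lemma ep_equiv_contract_repeat:
  assumes "edge_path K (l @ [v, v] @ r)"
  shows "ep_equiv K (l @ [v, v] @ r) (l @ [v] @ r)"
proof (rule ep_equiv_move[OF assms])
  have "edge_path K [v, v]"
    using edge_path_infix[OF assms] by simp
  then have "edge_path K [v]"
    unfolding edge_path_def by simp
  with \<open>edge_path K [v, v]\<close> show "edge_path K (l @ [v] @ r)"
    using edge_path_replace_infix[of K "[v, v]" "[v]" l r] assms by simp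
  show "ep_move K (l @ [v, v] @ r) (l @ [v] @ r)"
    unfolding ep_move_def by blast
qed

lemma ep_equiv_append_tl:
  assumes "edge_path K p" "edge_path K q" "last p = hd q"
  shows "ep_equiv K (p @ q) (p @ tl q)"
proof -
  have "p = butlast p @ [last p]"
    using assms(1) unfolding edge_path_def by simp
  moreover have "q = last p # tl q"
    using assms(2,3) unfolding edge_path_def by (cases q) auto
  ultimately have "p @ q = butlast p @ [last p, last p] @ tl q" "p @ tl q = butlast p @ [last p] @ tl q"
    by (metis append.assoc append_Cons append_Nil)+
  then show ?thesis
    using ep_equiv_contract_repeat edge_path_append[OF assms] by metis
qed

lemma ep_equiv_concat:
  assumes "ep_equiv K p p'" "ep_equiv K q q'" "edge_path K p" "edge_path K q" "last p = hd q"
  shows "ep_equiv K (p @ tl q) (p' @ tl q')"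
proof -
  have p': "edge_path K p' \<and> hd p' = hd p \<and> last p' = last p"
    using ep_equiv_edge_path assms by blast
  have q': "edge_path K q' \<and> hd q' = hd q \<and> last q' = last q"
    using ep_equiv_edge_path assms by blast
  have pq: "edge_path K (p @ q)"
    using edge_path_append assms by blast
  have p'q: "edge_path K (p' @ q)"
    using edge_path_replace_infix[of K p p' "[]" q] pq p' assms by simp
  have "ep_equiv K (p @ tl q) (p @ q)"
    using ep_equiv_append_tl ep_equiv_sym assms by blast
  also have "ep_equiv K (p @ q) (p' @ q)"
    using ep_equiv_append_context[of K p p' "[]" q] assms pq by simp
  also have "ep_equiv K (p' @ q) (p' @ q')"
    using ep_equiv_append_context[of K q q' p' "[]"] assms p'q by simp
  also have "ep_equiv K (p' @ q') (p' @ tl q')"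
    using ep_equiv_append_tl p' q' assms by metis
  finally show ?thesis .
qed

section \<open>Removing a vertex from edge paths\<close>

lemma ep_equiv_avoid_vertex:
  assumes bypass: "\<And>u w. edge_path K [u, x, w] \<Longrightarrow> u \<noteq> x \<Longrightarrow> w \<noteq> x \<Longrightarrow>
                      \<exists>m. ep_equiv K [u, x, w] m \<and> x \<notin> set m"
  shows "edge_path K p \<Longrightarrow> hd p \<noteq> x \<Longrightarrow> last p \<noteq> x \<Longrightarrow> \<exists>q. ep_equiv K p q \<and> x \<notin> set q"
proof (induction "count_list p x" arbitrary: p rule: less_induct)
  case less
  show ?case
  proof (cases "x \<in> set p")
    case False
    then show ?thesis using ep_equiv_refl by blast
  next
    case True
    then obtain xs ys where p: "p = xs @ x # ys" and "x \<notin> set xs"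
      using split_list_first by metis
    have "xs \<noteq> []" "ys \<noteq> []"
      using p less.prems by auto
    have "\<exists>p'. ep_equiv K p p' \<and> count_list p' x < count_list p x"
    proof (cases "hd ys = x")
      case True
      then have "p = xs @ [x, x] @ tl ys"
        using p \<open>ys \<noteq> []\<close> by (cases ys) auto
      then show ?thesis
        using ep_equiv_contract_repeat less.prems(1) by fastforce
    next
      case False
      have "last xs \<noteq> x"
        using \<open>x \<notin> set xs\<close> \<open>xs \<noteq> []\<close> by auto
      have p3: "p = butlast xs @ [last xs, x, hd ys] @ tl ys"
        using p \<open>xs \<noteq> []\<close> \<open>ys \<noteq> []\<close> by simp
      then have e: "edge_path K [last xs, x, hd ys]"
        using edge_path_infix less.prems(1) by (metis list.distinct(1))
      obtain m where m: "ep_equiv K [last xs, x, hd ys] m" "x \<notin> set m"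
        using bypass[OF e \<open>last xs \<noteq> x\<close> False] by blast
      have "ep_equiv K p (butlast xs @ m @ tl ys)"
        using ep_equiv_append_context[OF m(1) e] p3 less.prems(1) by metis
      moreover have "count_list (butlast xs @ m @ tl ys) x < count_list p x"
        using p3 m(2) by (simp add: count_list_0_iff)
      ultimately show ?thesis by blast
    qed
    then obtain p' where p': "ep_equiv K p p'" "count_list p' x < count_list p x"
      by blast
    moreover have "edge_path K p' \<and> hd p' = hd p \<and> last p' = last p"
      using ep_equiv_edge_path p' less.prems(1) by blast
    ultimately obtain q where "ep_equiv K p' q" "x \<notin> set q"
      using less.hyps less.prems by metis
    then show ?thesis
      using p'(1) ep_equiv_trans by blast
  qed
qed

definition face_closed :: "'a set set \<Rightarrow> bool" where
  "face_closed K \<longleftrightarrow> (\<forall>c\<in>K. \<forall>d. d \<subseteq> c \<longrightarrow> d \<noteq> {} \<longrightarrow> d \<in> K)"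

lemma ep_equiv_detour:
  assumes K: "face_closed K" and "{u, c, v} \<in> K" "{c, v, w} \<in> K"
  shows "ep_equiv K [u, v, w] [u, c, w]"
proof -
  have face1: "d \<in> K" if "d \<subseteq> {u, c, v}" "d \<noteq> {}" for d
    using K assms(2) that unfolding face_closed_def by blast
  have face2: "d \<in> K" if "d \<subseteq> {c, v, w}" "d \<noteq> {}" for d
    using K assms(3) that unfolding face_closed_def by blast
  have faces: "{u} \<in> K" "{c} \<in> K" "{v} \<in> K" "{w} \<in> K"
    "{u, c} \<in> K" "{c, v} \<in> K" "{v, w} \<in> K" "{c, w} \<in> K" "{u, v} \<in> K"
    by (auto intro: face1 face2)
  then have paths: "edge_path K [u, v, w]" "edge_path K [u, c, v, w]" "edge_path K [u, c, w]"
    unfolding edge_path_iff_successively by auto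
  have "ep_move K [u, c, v, w] [u, v, w]"
    unfolding ep_move_def using assms(2) by (intro disjI1 exI[of _ "[]"] exI[of _ "[w]"]) simp
  moreover have "ep_move K [u, c, v, w] [u, c, w]"
    unfolding ep_move_def using assms(3) by (intro disjI1 exI[of _ "[u]"] exI[of _ "[]"]) simp
  ultimately show ?thesis
    using paths ep_equiv_move ep_equiv_sym ep_equiv_trans by metis
qed

section \<open>The order complex\<close>

lemma spec_le_refl: "a \<in> topspace X \<Longrightarrow> spec_le X a a"
  unfolding spec_le_def by blast

lemma spec_le_trans: "spec_le X a b \<Longrightarrow> spec_le X b c \<Longrightarrow> spec_le X a c"
  unfolding spec_le_def by blast

lemma spec_le_subtopology:
  "S \<subseteq> topspace X \<Longrightarrow> spec_le (subtopology X S) a b \<longleftrightarrow> a \<in> S \<and> b \<in> S \<and> spec_le X a b"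
  unfolding spec_le_def openin_subtopology by auto

lemma order_complex_remove_vertex:
  "order_complex (subtopology X (topspace X - {x})) = {c \<in> order_complex X. x \<notin> c}"
  unfolding order_complex_def using spec_le_subtopology[of "topspace X - {x}" X] by auto

lemma face_closed_order_complex: "face_closed (order_complex X)"
  unfolding face_closed_def order_complex_def by (auto intro: finite_subset)

lemma order_complex_edge_comparable:
  "{p, q} \<in> order_complex X \<Longrightarrow> spec_le X p q \<or> spec_le X q p"
  unfolding order_complex_def by blast

lemma order_complex_chain3:
  assumes "spec_le X p q" "spec_le X q r"
  shows "{p, q, r} \<in> order_complex X"
proof -
  have "p \<in> topspace X" "q \<in> topspace X" "r \<in> topspace X"
    using assms unfolding spec_le_def by blast+
  then show ?thesis
    using assms spec_le_trans[OF assms] unfolding order_complex_def by (auto intro: spec_le_refl)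
qed

lemma order_complex_bypass_vertex:
  assumes "\<not> is_maximal_pt X x" "\<not> is_minimal_pt X x"
    and e: "edge_path (order_complex X) [u, x, w]" and "u \<noteq> x" "w \<noteq> x"
  shows "\<exists>m. ep_equiv (order_complex X) [u, x, w] m \<and> x \<notin> set m"
proof -
  let ?K = "order_complex X"
  have ux: "{u, x} \<in> ?K" and xw: "{x, w} \<in> ?K"
    using e unfolding edge_path_iff_successively by auto
  then have "x \<in> topspace X"
    unfolding order_complex_def by blast
  then obtain a b where a: "spec_le X a x" "a \<noteq> x" and b: "spec_le X x b" "b \<noteq> x"
    using assms(1,2) unfolding is_maximal_pt_def is_minimal_pt_def by blast
  have u: "spec_le X u x \<or> spec_le X x u"
    by (rule order_complex_edge_comparable[OF ux])
  have w: "spec_le X x w \<or> spec_le X w x"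
    by (rule order_complex_edge_comparable[OF xw])
  \<comment> \<open>If \<open>u, x, w\<close> is a chain, \<open>c = u\<close> serves: the detour then merely drops \<open>x\<close>.\<close>
  have "\<exists>c. c \<noteq> x \<and> {u, c, x} \<in> ?K \<and> {c, x, w} \<in> ?K"
  proof -
    consider "spec_le X u x" "spec_le X x w" | "spec_le X x u" "spec_le X w x"
      | "spec_le X u x" "spec_le X w x" | "spec_le X x u" "spec_le X x w"
      using u w by blast
    then show ?thesis
    proof cases
      case 1
      then show ?thesis using \<open>u \<noteq> x\<close> ux order_complex_chain3 by fastforce
    next
      case 2
      then have "{u, x, w} \<in> ?K"
        using order_complex_chain3[of X w x u] by (simp add: insert_commute)
      then show ?thesis using \<open>u \<noteq> x\<close> ux by auto
    next
      case 3
      then show ?thesis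
        using b order_complex_chain3[of X u x b] order_complex_chain3[of X w x b]
        by (metis insert_commute)
    next
      case 4
      then show ?thesis
        using a order_complex_chain3[of X a x u] order_complex_chain3[of X a x w]
        by (metis insert_commute)
    qed
  qed
  then obtain c where "c \<noteq> x" "{u, c, x} \<in> ?K" "{c, x, w} \<in> ?K"
    by blast
  then show ?thesis
    using ep_equiv_detour[OF face_closed_order_complex] \<open>u \<noteq> x\<close> \<open>w \<noteq> x\<close> by fastforce
qed

section \<open>The homomorphism induced by a subcomplex\<close>

lemma closed_edge_path_mono: "K \<subseteq> L \<Longrightarrow> closed_edge_path K v p \<Longrightarrow> closed_edge_path L v p"
  unfolding closed_edge_path_def using edge_path_mono by blast

lemma ep_equiv_some_ep_class: "ep_equiv K p (SOME q. q \<in> ep_class K p)"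
proof -
  have "p \<in> ep_class K p"
    unfolding ep_class_def using ep_equiv_refl by simp
  then have "(SOME q. q \<in> ep_class K p) \<in> ep_class K p"
    by (rule someI)
  then show ?thesis
    unfolding ep_class_def by simp
qed

lemma induced_incl_ep_class: "K' \<subseteq> K \<Longrightarrow> induced_incl K (ep_class K' p) = ep_class K p"
  unfolding induced_incl_def
  using ep_equiv_some_ep_class ep_equiv_mono ep_class_eq ep_equiv_sym by metis

lemma carrier_edge_path_group:
  "carrier (edge_path_group K v) = {ep_class K p | p. closed_edge_path K v p}"
  unfolding edge_path_group_def by simp

lemma edge_path_group_mult_ep_class:
  assumes "closed_edge_path K v p" "closed_edge_path K v q"
  shows "ep_class K p \<otimes>\<^bsub>edge_path_group K v\<^esub> ep_class K q = ep_class K (p @ tl q)"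
proof -
  have "ep_equiv K (p @ tl q) ((SOME p'. p' \<in> ep_class K p) @ tl (SOME q'. q' \<in> ep_class K q))"
    using assms unfolding closed_edge_path_def
    by (intro ep_equiv_concat ep_equiv_some_ep_class) auto
  then have "ep_class K (p @ tl q)
      = ep_class K ((SOME p'. p' \<in> ep_class K p) @ tl (SOME q'. q' \<in> ep_class K q))"
    by (rule ep_class_eq)
  then show ?thesis
    unfolding edge_path_group_def by simp
qed

lemma induced_incl_hom:
  assumes "K' \<subseteq> K"
  shows "induced_incl K \<in> hom (edge_path_group K' v) (edge_path_group K v)"
proof (rule homI)
  fix c
  assume "c \<in> carrier (edge_path_group K' v)"
  then show "induced_incl K c \<in> carrier (edge_path_group K v)"
    unfolding carrier_edge_path_group
    using induced_incl_ep_class[OF assms] closed_edge_path_mono[OF assms] by blast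
next
  fix c d
  assume "c \<in> carrier (edge_path_group K' v)" "d \<in> carrier (edge_path_group K' v)"
  then obtain p q where p: "c = ep_class K' p" "closed_edge_path K' v p"
    and q: "d = ep_class K' q" "closed_edge_path K' v q"
    unfolding carrier_edge_path_group by blast
  have "c \<otimes>\<^bsub>edge_path_group K' v\<^esub> d = ep_class K' (p @ tl q)"
    using edge_path_group_mult_ep_class[OF p(2) q(2)] p(1) q(1) by simp
  moreover have "ep_class K p \<otimes>\<^bsub>edge_path_group K v\<^esub> ep_class K q = ep_class K (p @ tl q)"
    using closed_edge_path_mono[OF assms p(2)] closed_edge_path_mono[OF assms q(2)]
    by (rule edge_path_group_mult_ep_class)
  ultimately show "induced_incl K (c \<otimes>\<^bsub>edge_path_group K' v\<^esub> d)
      = induced_incl K c \<otimes>\<^bsub>edge_path_group K v\<^esub> induced_incl K d"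
    using induced_incl_ep_class[OF assms] p(1) q(1) by simp
qed

lemma induced_incl_epi:
  assumes "K' \<subseteq> K"
    and deform: "\<And>p. closed_edge_path K v p \<Longrightarrow> \<exists>q. ep_equiv K p q \<and> edge_path K' q"
  shows "induced_incl K \<in> epi (edge_path_group K' v) (edge_path_group K v)"
proof -
  have hom: "induced_incl K \<in> hom (edge_path_group K' v) (edge_path_group K v)"
    using induced_incl_hom[OF assms(1)] .
  have "carrier (edge_path_group K v) \<subseteq> induced_incl K ` carrier (edge_path_group K' v)"
  proof
    fix c
    assume "c \<in> carrier (edge_path_group K v)"
    then obtain p where p: "c = ep_class K p" "closed_edge_path K v p"
      unfolding carrier_edge_path_group by blast
    then obtain q where q: "ep_equiv K p q" "edge_path K' q"
      using deform by blast
    have "closed_edge_path K' v q"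
      using ep_equiv_closed_edge_path[OF q(1) p(2)] q(2) unfolding closed_edge_path_def by simp
    then have "ep_class K' q \<in> carrier (edge_path_group K' v)"
      unfolding carrier_edge_path_group by blast
    moreover have "c = induced_incl K (ep_class K' q)"
      using induced_incl_ep_class[OF assms(1)] ep_class_eq[OF q(1)] p(1) by simp
    ultimately show "c \<in> induced_incl K ` carrier (edge_path_group K' v)"
      by (rule rev_image_eqI)
  qed
  with hom_carrier[OF hom] have "induced_incl K ` carrier (edge_path_group K' v) = carrier (edge_path_group K v)"
    by (rule equalityI)
  with hom show ?thesis
    unfolding epi_def by simp
qed

theorem mainTheorem13:
  fixes X :: "'a topology" and x0 x :: 'a
  assumes "finite (topspace X)"
    and "t0_space X"
    and "connected_space X"
    and "x0 \<in> topspace X" and "x \<in> topspace X" and "x0 \<noteq> x"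
    and "\<not> is_maximal_pt X x" and "\<not> is_minimal_pt X x"
  shows "induced_incl (order_complex X)
           \<in> epi (edge_path_group (order_complex (subtopology X (topspace X - {x}))) x0)
                 (edge_path_group (order_complex X) x0)"
proof -
  let ?K = "order_complex X"
  have "{c \<in> ?K. x \<notin> c} \<subseteq> ?K"
    by blast
  moreover have "\<exists>q. ep_equiv ?K p q \<and> edge_path {c \<in> ?K. x \<notin> c} q"
    if "closed_edge_path ?K x0 p" for p
  proof -
    have p: "edge_path ?K p" "hd p \<noteq> x" "last p \<noteq> x"
      using that \<open>x0 \<noteq> x\<close> unfolding closed_edge_path_def by auto
    obtain q where q: "ep_equiv ?K p q" "x \<notin> set q"
      using ep_equiv_avoid_vertex[OF order_complex_bypass_vertex[OF assms(7,8)] p] by blast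
    have "edge_path {c \<in> ?K. x \<notin> c} q"
      using ep_equiv_edge_path[OF q(1) p(1)] q(2) by (blast intro: edge_path_remove_vertex)
    with q(1) show ?thesis
      by blast
  qed
  ultimately show ?thesis
    unfolding order_complex_remove_vertex by (rule induced_incl_epi)
qed

end
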